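(* Let $F\in\mathbb{C}[x]$ be a polynomial of degree $n\ge 2$, let $\Delta=\Delta(m,r)$ be a disk, and let $\rho_1=\frac{2\sqrt2}{3}$, $\rho_2=\frac43$. Let $\mathbf{T}_*(\Delta)$ be defined (as in the context) from any family of soft tests $\tilde T_0,\ldots,\tilde T_n$ with the stated properties. Then: (a) if $\Delta$ is $(\rho_1,\rho_2)$-isolating for a set of $k$ roots of $F$, then $\mathbf{T}_*(\Delta)$ returns $k$; (b) if $\mathbf{T}_*(\Delta)$ returns some $k\ge 0$, then $\Delta$ contains exactly $k$ roots of $F$ (counted with multiplicity).
   Context: $\Delta(m,r)$ is the open disk with center $m$, radius $r>0$, $\lambda\cdot\Delta(m,r):=\Delta(m,\lambda r)$. A disk $\Delta$ is $(\rho_1,\rho_2)$-isolating for a set $S$ of roots of $F$ (with multiplicity) if $\rho_1\cdot\Delta$ contains exactly the roots in $S$ and $\rho_2\cdot\Delta\setminus\rho_1\cdot\Delta$ contains no root of $F$. Let $F_\Delta(x):=F(m+rx)$. Graeffe iteration: for $P$ of degree $n$ written $P(x)=P_e(x^2)+xP_o(x^2)$, $P^{[1]}(x):=(-1)^n[P_e(x)^2-xP_o(x)^2]$, $P^{[j]}:=(P^{[j-1]})^{[1]}$. Let $N:=\lceil\log_2(1+\log_2n)\rceil+5$ and $G:=F_\Delta^{[N]}=\sum_{i=0}^n g_ix^i$. For $K\ge1$, $T_k(0,1,K,G)$ holds iff $|g_k|>K\sum_{i\ne k}|g_i|$. For each $k\in\{0,\ldots,n\}$, $\tilde T_k$ is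 a procedure returning True, False, or Undecided such that: it returns True only if $T_k(0,1,1,G)$ holds, and it returns True whenever $T_k(0,1,\frac32,G)$ holds. Then $\mathbf{T}_*(\Delta)$ returns $k$ if there is a $k$ for which $\tilde T_k$ returns True, and returns $-1$ otherwise. *)

theory Defs
  imports Complex_Main "HOL-Computational_Algebra.Polynomial"
begin

definition disk :: "complex \<Rightarrow> real \<Rightarrow> complex set" where
  "disk m r = {z. cmod (z - m) < r}"

definition root_count :: "complex poly \<Rightarrow> complex set \<Rightarrow> nat" where
  "root_count F S = (\<Sum>z\<in>{z. poly F z = 0 \<and> z \<in> S}. order z F)"

definition isolating :: "complex poly \<Rightarrow> complex \<Rightarrow> real \<Rightarrow> real \<Rightarrow> real \<Rightarrow> nat \<Rightarrow> bool" where
  "isolating F m r \<rho>1 \<rho>2 k \<longleftrightarrow>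
     root_count F (disk m (\<rho>1 * r)) = k \<and>
     (\<forall>z. z \<in> disk m (\<rho>2 * r) - disk m (\<rho>1 * r) \<longrightarrow> poly F z \<noteq> 0)"

definition F_disk :: "complex poly \<Rightarrow> complex \<Rightarrow> real \<Rightarrow> complex poly" where
  "F_disk F m r = pcompose F [:m, complex_of_real r:]"

text \<open>Even and odd parts: P(x) = P_e(x^2) + x P_o(x^2).\<close>
definition even_part :: "'a::comm_ring_1 poly \<Rightarrow> 'a poly" where
  "even_part P = Poly (map (\<lambda>i. coeff P (2 * i)) [0..<Suc (degree P)])"

definition odd_part :: "'a::comm_ring_1 poly \<Rightarrow> 'a poly" where
  "odd_part P = Poly (map (\<lambda>i. coeff P (2 * i + 1)) [0..<Suc (degree P)])"

definition graeffe :: "'a::comm_ring_1 poly \<Rightarrow> 'a poly" where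
  "graeffe P = smult ((-1) ^ degree P)
      (even_part P ^ 2 - [:0, 1:] * odd_part P ^ 2)"

definition graeffe_iter :: "nat \<Rightarrow> 'a::comm_ring_1 poly \<Rightarrow> 'a poly" where
  "graeffe_iter j P = (graeffe ^^ j) P"

definition graeffe_N :: "nat \<Rightarrow> nat" where
  "graeffe_N n = nat \<lceil>log 2 (1 + log 2 (real n))\<rceil> + 5"

definition T_test :: "complex poly \<Rightarrow> nat \<Rightarrow> real \<Rightarrow> nat \<Rightarrow> bool" where
  "T_test G n K k \<longleftrightarrow> cmod (coeff G k) > K * (\<Sum>i\<in>{0..n} - {k}. cmod (coeff G i))"

datatype soft_result = STrue | SFalse | Undecided

definition T_star :: "nat \<Rightarrow> (nat \<Rightarrow> soft_result) \<Rightarrow> int" where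
  "T_star n Tt = (if \<exists>k\<le>n. Tt k = STrue then int (SOME k. k \<le> n \<and> Tt k = STrue) else -1)"

end

theory Submission
  imports Defs "HOL-Complex_Analysis.Complex_Analysis"
    "HOL-Computational_Algebra.Fundamental_Theorem_Algebra"
begin

text \<open>
  Everything is reduced to root counts of \<open>G = F\<^sub>\<Delta>\<^sup>[\<^sup>N\<^sup>]\<close> in centred disks. A Graeffe step
  squares the roots and keeps their multiplicities, so \<open>G\<close> has the roots \<open>b ^ 2 ^ N\<close> of
  \<open>F\<^sub>\<Delta>\<close>, and the root count of \<open>G\<close> in \<open>\<Delta>(0, \<rho> ^ 2 ^ N)\<close> is that of \<open>F\<^sub>\<Delta>\<close> in \<open>\<Delta>(0, \<rho>)\<close>.

  (b) A soft test returning True certifies \<open>T\<^sub>k(0,1,1,G)\<close>, and Pellet's theorem (Rouche's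
  theorem against the dominant monomial \<open>g\<^sub>k x\<^sup>k\<close>) shows that \<open>G\<close>, hence \<open>F\<^sub>\<Delta>\<close>, has exactly
  \<open>k\<close> roots in the unit disk.

  (a) Isolation splits the roots of \<open>F\<^sub>\<Delta>\<close> into \<open>|b| < \<rho>\<^sub>1\<close> and \<open>|b| \<ge> \<rho>\<^sub>2\<close>, where
  \<open>\<rho>\<^sub>1\<rho>\<^sub>2 \<ge> 1\<close>. After \<open>N\<close> Graeffe steps the roots of \<open>G\<close> are tiny (\<open>< \<delta> = \<rho>\<^sub>1 ^ 2 ^ N\<close>) or
  huge (\<open>\<ge> 1/\<delta>\<close>), and \<open>n\<delta> \<le> 1/4\<close> by the choice of \<open>N\<close>. Up to a scalar, \<open>G\<close> is the product
  of the factors \<open>x - w\<close> over tiny roots and \<open>1 - x/w\<close> over huge ones, i.e. \<open>x\<^sup>k\<close> plus a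
  polynomial whose coefficients have 1-norm at most \<open>(1 + \<delta>)\<^sup>n - 1 < 2/3\<close>. Hence
  \<open>T\<^sub>k(0,1,3/2,G)\<close> holds, so \<open>T\<^sub>k\<close> returns True, and no other soft test can, since
  \<open>T\<^sub>j(0,1,1,G)\<close> and \<open>T\<^sub>k(0,1,3/2,G)\<close> exclude each other for \<open>j \<noteq> k\<close>.
\<close>

lemma root_count_eq_size_proots:
  assumes "p \<noteq> 0"
  shows "root_count p S = size (filter_mset (\<lambda>z. z \<in> S) (proots p))"
proof -
  have "set_mset (filter_mset (\<lambda>z. z \<in> S) (proots p)) = {z. poly p z = 0 \<and> z \<in> S}"
    using assms by auto
  then show ?thesis
    using assms by (simp add: root_count_def size_multiset_overloaded_eq)
qed

lemma proots_smult_prod_linear: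
  fixes A :: "'a::idom multiset"
  assumes "c \<noteq> 0"
  shows "proots (smult c (\<Prod>a\<in>#A. [:-a, 1:])) = A"
proof -
  have "proots (\<Prod>a\<in>#A. [:-a, 1:]) = A"
  proof (induction A)
    case (add x A)
    have "(\<Prod>a\<in>#add_mset x A. [:-a, 1:]) = [:-x, 1:] * (\<Prod>a\<in>#A. [:-a, 1:])"
      by simp
    also have "proots \<dots> = add_mset x A"
      by (subst proots_mult) (auto simp: add.IH)
    finally show ?case .
  qed simp
  then show ?thesis
    using assms by simp
qed

lemma root_count_le_degree:
  assumes "p \<noteq> 0"
  shows "root_count p S \<le> degree p"
  using order_trans[OF size_filter_mset_lesseq size_proots_le]
  by (simp add: assms root_count_eq_size_proots)

lemma degree_smult_prod_linear:
  fixes A :: "complex multiset"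
  assumes "c \<noteq> 0"
  shows "degree (smult c (\<Prod>a\<in>#A. [:-a, 1:])) = size A"
  by (metis assms proots_smult_prod_linear size_proots_complex)

section \<open>Graeffe iteration\<close>

lemma coeff_even_part: "coeff (even_part P) i = coeff P (2 * i)"
  by (auto simp: even_part_def nth_default_def coeff_eq_0 simp del: upt_Suc)

lemma coeff_odd_part: "coeff (odd_part P) i = coeff P (2 * i + 1)"
  by (auto simp: odd_part_def nth_default_def coeff_eq_0 simp del: upt_Suc)

lemma graeffe_0 [simp]: "graeffe 0 = 0"
  by (simp add: graeffe_def even_part_def odd_part_def)

lemma poly_eq_sum_lessThan:
  fixes p :: "'a::comm_semiring_1 poly"
  assumes "degree p < K"
  shows "poly p x = (\<Sum>i<K. coeff p i * x ^ i)"
  unfolding Polynomial.poly_altdef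
  by (rule sum.mono_neutral_left) (use assms in \<open>auto simp: coeff_eq_0\<close>)

lemma sum_lessThan_double:
  fixes f :: "nat \<Rightarrow> 'a::comm_monoid_add"
  shows "(\<Sum>i<2 * K. f i) = (\<Sum>i<K. f (2 * i) + f (2 * i + 1))"
  by (induction K) (auto simp: ac_simps)

lemma poly_even_odd_part:
  fixes P :: "'a::comm_ring_1 poly"
  shows "poly P z = poly (even_part P) (z\<^sup>2) + z * poly (odd_part P) (z\<^sup>2)"
proof -
  define K where "K = Suc (degree P)"
  have "degree (even_part P) < K" "degree (odd_part P) < K"
    using degree_le[of "degree P" "even_part P"] degree_le[of "degree P" "odd_part P"]
    by (auto simp: coeff_even_part coeff_odd_part coeff_eq_0 K_def)
  moreover have "(z\<^sup>2) ^ i = (z ^ i)\<^sup>2" for i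
    by (metis power_mult mult.commute)
  ultimately have "poly (even_part P) (z\<^sup>2) + z * poly (odd_part P) (z\<^sup>2)
      = (\<Sum>i<K. coeff P (2 * i) * z ^ (2 * i) + coeff P (2 * i + 1) * z ^ (2 * i + 1))"
    by (simp add: poly_eq_sum_lessThan coeff_even_part coeff_odd_part sum.distrib
        sum_distrib_left power_mult algebra_simps)
  also have "\<dots> = (\<Sum>i<2 * K. coeff P i * z ^ i)"
    by (rule sum_lessThan_double[of "\<lambda>i. coeff P i * z ^ i", symmetric])
  also have "\<dots> = poly P z"
    by (rule poly_eq_sum_lessThan[symmetric]) (simp add: K_def)
  finally show ?thesis ..
qed

lemma poly_graeffe_square:
  fixes P :: "'a::comm_ring_1 poly"
  shows "poly (graeffe P) (z\<^sup>2) = (-1) ^ degree P * poly P z * poly P (-z)"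
proof -
  define E where "E = poly (even_part P) (z\<^sup>2)"
  define D where "D = poly (odd_part P) (z\<^sup>2)"
  have plus: "poly P z = E + z * D" and minus: "poly P (-z) = E - z * D"
    using poly_even_odd_part[of P z] poly_even_odd_part[of P "-z"] by (simp_all add: E_def D_def)
  have "poly (graeffe P) (z\<^sup>2) = (-1) ^ degree P * (E\<^sup>2 - z\<^sup>2 * D\<^sup>2)"
    by (simp add: graeffe_def E_def D_def)
  then show ?thesis
    unfolding plus minus by (simp add: algebra_simps power2_eq_square)
qed

lemma prod_mset_diff_times_neg_diff:
  fixes z :: "'a::comm_ring_1"
  shows "(\<Prod>a\<in>#A. z - a) * (\<Prod>a\<in>#A. - z - a) = (-1) ^ size A * (\<Prod>a\<in>#A. z\<^sup>2 - a\<^sup>2)"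
  by (induction A) (auto simp: algebra_simps power2_eq_square)

text \<open>Every complex number is a square, so the identity at the points \<open>z\<^sup>2\<close> determines the
  polynomial.\<close>
lemma graeffe_smult_prod_linear:
  fixes A :: "complex multiset"
  shows "graeffe (smult c (\<Prod>a\<in>#A. [:-a, 1:])) = smult (c\<^sup>2) (\<Prod>a\<in>#A. [:-(a\<^sup>2), 1:])"
proof (cases "c = 0")
  case False
  define P where "P = smult c (\<Prod>a\<in>#A. [:-a, 1:])"
  have "poly (graeffe P) w = poly (smult (c\<^sup>2) (\<Prod>a\<in>#A. [:-(a\<^sup>2), 1:])) w" for w
  proof -
    define z where "z = csqrt w"
    have w: "w = z\<^sup>2"
      by (simp add: z_def)
    have P: "poly P x = c * (\<Prod>a\<in>#A. x - a)" for x
      by (simp add: P_def poly_prod_mset)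
    have "poly (graeffe P) w = (-1) ^ size A * poly P z * poly P (-z)"
      unfolding w poly_graeffe_square P_def degree_smult_prod_linear[OF False] ..
    also have "\<dots> = (-1) ^ size A * c\<^sup>2 * ((\<Prod>a\<in>#A. z - a) * (\<Prod>a\<in>#A. - z - a))"
      by (simp add: P power2_eq_square)
    also have "\<dots> = c\<^sup>2 * (\<Prod>a\<in>#A. z\<^sup>2 - a\<^sup>2)"
      by (simp add: prod_mset_diff_times_neg_diff flip: power_add)
    finally show ?thesis
      by (simp add: w poly_prod_mset)
  qed
  then have "poly (graeffe P) = poly (smult (c\<^sup>2) (\<Prod>a\<in>#A. [:-(a\<^sup>2), 1:]))"
    by (rule ext)
  then show ?thesis
    unfolding P_def by (simp only: poly_eq_poly_eq_iff)
qed simp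

lemma graeffe_iter_factorization:
  fixes P :: "complex poly"
  shows "graeffe_iter j P
      = smult (lead_coeff P ^ 2 ^ j) (\<Prod>a\<in>#proots P. [:-(a ^ 2 ^ j), 1:])"
proof (induction j)
  case 0
  then show ?case
    by (simp add: graeffe_iter_def complex_poly_decompose_multiset)
next
  case (Suc j)
  have "graeffe_iter (Suc j) P = graeffe (graeffe_iter j P)"
    by (simp add: graeffe_iter_def)
  also have "\<dots> = graeffe (smult (lead_coeff P ^ 2 ^ j)
      (\<Prod>b\<in>#image_mset (\<lambda>a. a ^ 2 ^ j) (proots P). [:-b, 1:]))"
    by (simp add: Suc image_mset.compositionality comp_def)
  also have "\<dots> = smult ((lead_coeff P ^ 2 ^ j)\<^sup>2)
      (\<Prod>b\<in>#image_mset (\<lambda>a. a ^ 2 ^ j) (proots P). [:-(b\<^sup>2), 1:])"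
    by (rule graeffe_smult_prod_linear)
  also have "\<dots> = smult (lead_coeff P ^ 2 ^ Suc j) (\<Prod>a\<in>#proots P. [:-(a ^ 2 ^ Suc j), 1:])"
    by (simp add: image_mset.compositionality comp_def power_mult[symmetric] mult.commute)
  finally show ?case .
qed

lemma graeffe_iter_eq_0_iff:
  fixes P :: "complex poly"
  shows "graeffe_iter j P = 0 \<longleftrightarrow> P = 0"
  by (auto simp: graeffe_iter_factorization dest: sym)

lemma proots_graeffe_iter:
  fixes P :: "complex poly"
  assumes "P \<noteq> 0"
  shows "proots (graeffe_iter j P) = image_mset (\<lambda>a. a ^ 2 ^ j) (proots P)"
  using proots_smult_prod_linear[of "lead_coeff P ^ 2 ^ j" "image_mset (\<lambda>a. a ^ 2 ^ j) (proots P)"]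
  by (simp add: assms graeffe_iter_factorization image_mset.compositionality comp_def)

lemma degree_graeffe_iter:
  fixes P :: "complex poly"
  shows "degree (graeffe_iter j P) = degree P"
proof (cases "P = 0")
  case False
  have "degree (graeffe_iter j P) = size (proots (graeffe_iter j P))"
    by (rule size_proots_complex[symmetric])
  also have "\<dots> = degree P"
    by (simp add: proots_graeffe_iter False size_proots_complex)
  finally show ?thesis .
qed (simp add: graeffe_iter_factorization)

lemma poly_graeffe_iter_eq_0_iff:
  fixes P :: "complex poly"
  assumes "P \<noteq> 0"
  shows "poly (graeffe_iter j P) w = 0 \<longleftrightarrow> (\<exists>b. poly P b = 0 \<and> w = b ^ 2 ^ j)"
proof -
  have "poly (graeffe_iter j P) w = 0 \<longleftrightarrow> w \<in># proots (graeffe_iter j P)"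
    using assms by (simp add: graeffe_iter_eq_0_iff)
  then show ?thesis
    using assms by (auto simp: proots_graeffe_iter)
qed

lemma root_count_graeffe_iter_disk:
  fixes P :: "complex poly"
  assumes "P \<noteq> 0" and "\<rho> \<ge> 0"
  shows "root_count (graeffe_iter j P) (disk 0 (\<rho> ^ 2 ^ j)) = root_count P (disk 0 \<rho>)"
proof -
  have "cmod (a ^ 2 ^ j) < \<rho> ^ 2 ^ j \<longleftrightarrow> cmod a < \<rho>" for a
    using assms(2) power_less_imp_less_base[of "cmod a" "2 ^ j" \<rho>]
    by (auto simp: norm_power intro: power_strict_mono)
  then show ?thesis
    using assms
    by (simp add: root_count_eq_size_proots graeffe_iter_eq_0_iff proots_graeffe_iter
        filter_mset_image_mset disk_def)
qed

lemma graeffe_iter_roots_separated: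
  fixes P :: "complex poly"
  assumes "P \<noteq> 0" and "0 < \<rho>\<^sub>1" and "1 \<le> \<rho>\<^sub>1 * \<rho>\<^sub>2"
    and sep: "\<And>b. poly P b = 0 \<Longrightarrow> cmod b < \<rho>\<^sub>1 \<or> \<rho>\<^sub>2 \<le> cmod b"
    and "poly (graeffe_iter j P) w = 0"
  shows "cmod w < \<rho>\<^sub>1 ^ 2 ^ j \<or> 1 / \<rho>\<^sub>1 ^ 2 ^ j \<le> cmod w"
proof -
  obtain b where b: "poly P b = 0" "w = b ^ 2 ^ j"
    using assms(1,5) poly_graeffe_iter_eq_0_iff by blast
  have "0 < \<rho>\<^sub>2"
    using assms(2,3) zero_less_mult_pos[of "\<rho>\<^sub>1" "\<rho>\<^sub>2"] by linarith
  have "1 \<le> (\<rho>\<^sub>1 * \<rho>\<^sub>2) ^ 2 ^ j"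
    using assms(3) by (rule one_le_power)
  then have "1 / \<rho>\<^sub>1 ^ 2 ^ j \<le> \<rho>\<^sub>2 ^ 2 ^ j"
    using assms(2) by (simp add: divide_le_eq power_mult_distrib mult.commute)
  moreover have "\<rho>\<^sub>2 \<le> cmod b \<Longrightarrow> \<rho>\<^sub>2 ^ 2 ^ j \<le> cmod w"
    using \<open>0 < \<rho>\<^sub>2\<close> b(2) by (auto simp: norm_power intro!: power_mono)
  moreover have "cmod b < \<rho>\<^sub>1 \<Longrightarrow> cmod w < \<rho>\<^sub>1 ^ 2 ^ j"
    using b(2) by (simp add: norm_power power_strict_mono)
  ultimately show ?thesis
    using sep[OF b(1)] by force
qed

section \<open>Moving the disk to the unit disk\<close>

lemma pcompose_prod_mset: "pcompose (\<Prod>a\<in>#A. f a) q = (\<Prod>a\<in>#A. pcompose (f a) q)"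
  by (induction A) (auto simp: pcompose_mult pcompose_1)

lemma prod_mset_smult: "(\<Prod>a\<in>#A. smult c (f a)) = smult (c ^ size A) (\<Prod>a\<in>#A. f a)"
  by (induction A) (auto simp: mult_ac)

lemma poly_F_disk: "poly (F_disk F m r) z = poly F (m + of_real r * z)"
  by (simp add: F_disk_def poly_pcompose ac_simps)

lemma F_disk_factorization:
  assumes "r \<noteq> 0"
  shows "F_disk F m r = smult (lead_coeff F * of_real r ^ degree F)
           (\<Prod>a\<in>#proots F. [:-((a - m) / of_real r), 1:])"
proof -
  have linear: "pcompose [:-a, 1:] [:m, of_real r:] = smult (of_real r) [:-((a - m) / of_real r), 1:]"
    for a
    using assms by (simp add: pcompose_pCons field_simps)
  have "F_disk F m r = smult (lead_coeff F) (\<Prod>a\<in>#proots F. pcompose [:-a, 1:] [:m, of_real r:])"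
    unfolding F_disk_def
    by (subst complex_poly_decompose_multiset[symmetric])
      (simp add: pcompose_smult pcompose_prod_mset)
  also have "\<dots> = smult (lead_coeff F) (smult (of_real r ^ size (proots F))
      (\<Prod>a\<in>#proots F. [:-((a - m) / of_real r), 1:]))"
    by (simp only: linear prod_mset_smult)
  finally show ?thesis
    by (simp add: size_proots_complex)
qed

lemma proots_F_disk:
  assumes "F \<noteq> 0" and "r \<noteq> 0"
  shows "proots (F_disk F m r) = image_mset (\<lambda>a. (a - m) / of_real r) (proots F)"
  using proots_smult_prod_linear[of "lead_coeff F * of_real r ^ degree F"
      "image_mset (\<lambda>a. (a - m) / of_real r) (proots F)"]
  by (simp add: assms F_disk_factorization image_mset.compositionality comp_def)

lemma degree_F_disk:
  assumes "r \<noteq> 0"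
  shows "degree (F_disk F m r) = degree F"
  using assms by (simp add: F_disk_def degree_pcompose)

lemma F_disk_eq_0_iff:
  assumes "r \<noteq> 0"
  shows "F_disk F m r = 0 \<longleftrightarrow> F = 0"
  using assms by (simp add: F_disk_def pcompose_eq_0_iff)

lemma root_count_F_disk:
  assumes "F \<noteq> 0" and "r > 0"
  shows "root_count (F_disk F m r) (disk 0 \<rho>) = root_count F (disk m (\<rho> * r))"
proof -
  have "cmod ((a - m) / of_real r) < \<rho> \<longleftrightarrow> cmod (a - m) < \<rho> * r" for a
    using assms(2) by (simp add: norm_divide divide_less_eq)
  then show ?thesis
    using assms
    by (simp add: root_count_eq_size_proots F_disk_eq_0_iff proots_F_disk
        filter_mset_image_mset disk_def)
qed

lemma isolating_roots_F_disk:
  assumes "isolating F m r \<rho>\<^sub>1 \<rho>\<^sub>2 k" and "r > 0" and "poly (F_disk F m r) b = 0"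
  shows "cmod b < \<rho>\<^sub>1 \<or> \<rho>\<^sub>2 \<le> cmod b"
proof (rule ccontr)
  assume "\<not> ?thesis"
  then have "r * \<rho>\<^sub>1 \<le> r * cmod b" and "r * cmod b < r * \<rho>\<^sub>2"
    using assms(2) by simp_all
  moreover have "cmod ((m + of_real r * b) - m) = r * cmod b"
    using assms(2) by (simp add: norm_mult)
  ultimately have "m + of_real r * b \<in> disk m (\<rho>\<^sub>2 * r) - disk m (\<rho>\<^sub>1 * r)"
    by (simp add: disk_def mult.commute)
  then show False
    using assms(1,3) by (simp add: isolating_def poly_F_disk)
qed

section \<open>Pellet's theorem\<close>

lemma zorder_poly:
  fixes p :: "complex poly"
  assumes "p \<noteq> 0"
  shows "zorder (poly p) z = int (order z p)"
proof -
  obtain q where q: "p = [:- z, 1:] ^ order z p * q" "\<not> [:- z, 1:] dvd q"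
    using order_decomp[OF assms] by blast
  then have "poly q z \<noteq> 0"
    by (simp add: poly_eq_0_iff_dvd)
  show ?thesis
  proof (rule zorder_eqI[where S = UNIV and g = "poly q"])
    fix w
    assume "w \<noteq> z"
    show "poly p w = poly q w * (w - z) powi int (order z p)"
      by (subst q(1)) (simp add: power_int_of_nat mult.commute)
  qed (use \<open>poly q z \<noteq> 0\<close> in \<open>auto intro!: holomorphic_intros\<close>)
qed

lemma winding_number_circlepath_sum_zorder_poly:
  fixes p :: "complex poly"
  assumes "p \<noteq> 0" and "R > 0" and "\<And>z. cmod (z - c) = R \<Longrightarrow> poly p z \<noteq> 0"
  shows "(\<Sum>z | poly p z = 0. winding_number (circlepath c R) z * of_int (zorder (poly p) z))
       = of_nat (root_count p (disk c R))"
proof -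
  have summand: "winding_number (circlepath c R) z * of_int (zorder (poly p) z)
      = (if z \<in> disk c R then of_nat (order z p) else 0)" if "poly p z = 0" for z
  proof (cases "z \<in> disk c R")
    case True
    then show ?thesis
      using winding_number_circlepath[of z c R] by (simp add: zorder_poly assms(1) disk_def norm_minus_commute)
  next
    case False
    with assms(3) that have "z \<notin> cball c R"
      by (auto simp: disk_def dist_norm norm_minus_commute)
    then have "winding_number (circlepath c R) z = 0"
      by (intro winding_number_zero_outside[where s = "cball c R"]) (use assms(2) in \<open>auto simp: sphere_def\<close>)
    then show ?thesis
      using False by simp
  qed
  have "(\<Sum>z | poly p z = 0. winding_number (circlepath c R) z * of_int (zorder (poly p) z))
      = (\<Sum>z | poly p z = 0. if z \<in> disk c R then of_nat (order z p) else 0)"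
    by (intro sum.cong) (auto simp: summand)
  also have "\<dots> = (\<Sum>z | poly p z = 0 \<and> z \<in> disk c R. of_nat (order z p))"
    using poly_roots_finite[OF assms(1)] by (simp add: sum.inter_filter[symmetric] conj_commute)
  finally show ?thesis
    by (simp add: root_count_def)
qed

lemma T_test_dominates_on_unit_circle:
  fixes G :: "complex poly"
  assumes "degree G \<le> n" and "k \<le> n" and "T_test G n 1 k" and "cmod z = 1"
  shows "cmod (poly G z - coeff G k * z ^ k) < cmod (coeff G k * z ^ k)"
proof -
  have "poly G z = (\<Sum>i\<in>{0..n}. coeff G i * z ^ i)"
    using poly_eq_sum_lessThan[of G "Suc n" z] assms(1)
    by (simp add: lessThan_Suc_atMost atLeast0AtMost)
  also have "\<dots> = coeff G k * z ^ k + (\<Sum>i\<in>{0..n} - {k}. coeff G i * z ^ i)"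
    using assms(2) by (subst sum.remove[of _ k]) auto
  finally have "cmod (poly G z - coeff G k * z ^ k) \<le> (\<Sum>i\<in>{0..n} - {k}. cmod (coeff G i * z ^ i))"
    by (simp add: norm_sum)
  also have "\<dots> = (\<Sum>i\<in>{0..n} - {k}. cmod (coeff G i))"
    using assms(4) by (simp add: norm_mult norm_power)
  also have "\<dots> < cmod (coeff G k * z ^ k)"
    using assms(3,4) by (simp add: T_test_def norm_mult norm_power)
  finally show ?thesis .
qed

text \<open>By Rouche's theorem on the unit circle, \<open>G\<close> has as many roots in
  the unit disk as its dominant monomial \<open>g\<^sub>k x\<^sup>k\<close>.\<close>
theorem root_count_unit_disk_of_T_test:
  fixes G :: "complex poly"
  assumes "degree G \<le> n" and "k \<le> n" and dom: "T_test G n 1 k"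
  shows "root_count G (disk 0 1) = k"
proof -
  define c where "c = coeff G k"
  define f where "f = (\<lambda>z::complex. c * z ^ k)"
  define g where "g = (\<lambda>z. poly G z - f z)"
  have "0 \<le> (\<Sum>i\<in>{0..n} - {k}. cmod (coeff G i))"
    by (intro sum_nonneg) auto
  then have "c \<noteq> 0"
    using dom by (auto simp: c_def T_test_def)
  then have "G \<noteq> 0"
    by (auto simp: c_def)
  have g_less_f: "cmod (g z) < cmod (f z)" if "cmod z = 1" for z
    using T_test_dominates_on_unit_circle[OF assms that] by (simp add: f_def g_def c_def)
  have "(\<Sum>z\<in>{z \<in> UNIV. f z + g z = 0}. winding_number (circlepath 0 1) z * zorder (\<lambda>z. f z + g z) z)
      = (\<Sum>z\<in>{z \<in> UNIV. f z = 0}. winding_number (circlepath 0 1) z * zorder f z)"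
  proof (rule Rouche_theorem)
    show "finite {z \<in> UNIV. f z + g z = 0}"
      using poly_roots_finite[OF \<open>G \<noteq> 0\<close>] by (simp add: g_def)
    show "finite {z \<in> UNIV. f z = 0}"
      by (rule finite_subset[of _ "{0}"]) (auto simp: f_def \<open>c \<noteq> 0\<close>)
  qed (use g_less_f in \<open>auto simp: f_def g_def intro!: holomorphic_intros\<close>)
  also have "\<dots> = of_nat k"
  proof (cases "k = 0")
    case False
    then have "{z \<in> UNIV. f z = 0} = {0}"
      by (auto simp: f_def \<open>c \<noteq> 0\<close>)
    moreover have "zorder f 0 = int k"
      by (rule zorder_eqI[where S = UNIV and g = "\<lambda>_. c"]) (auto simp: f_def \<open>c \<noteq> 0\<close> power_int_of_nat)
    ultimately show ?thesis
      by (simp add: winding_number_circlepath_centre)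
  qed (simp add: f_def \<open>c \<noteq> 0\<close>)
  finally have "(\<Sum>z | poly G z = 0. winding_number (circlepath 0 1) z * of_int (zorder (poly G) z))
      = of_nat k"
    by (simp add: g_def)
  moreover have "poly G z \<noteq> 0" if "cmod (z - 0) = 1" for z
    using g_less_f[of z] that by (auto simp: g_def)
  ultimately show ?thesis
    using winding_number_circlepath_sum_zorder_poly[OF \<open>G \<noteq> 0\<close>, of 1 0] by simp
qed

section \<open>Polynomials close to a monomial\<close>

definition coeff_norm1 :: "'a::real_normed_field poly \<Rightarrow> real" where
  "coeff_norm1 p = (\<Sum>i\<le>degree p. norm (coeff p i))"

lemma coeff_norm1_eq_sum:
  "degree p \<le> N \<Longrightarrow> coeff_norm1 p = (\<Sum>i\<le>N. norm (coeff p i))"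
  unfolding coeff_norm1_def by (rule sum.mono_neutral_left) (auto simp: coeff_eq_0)

lemma coeff_norm1_nonneg: "coeff_norm1 p \<ge> 0"
  unfolding coeff_norm1_def by (intro sum_nonneg) auto

lemma coeff_norm1_0 [simp]: "coeff_norm1 0 = 0"
  by (simp add: coeff_norm1_def)

lemma coeff_norm1_pCons: "coeff_norm1 (pCons a p) = norm a + coeff_norm1 p"
proof -
  have "coeff_norm1 (pCons a p) = (\<Sum>i\<le>Suc (degree p). norm (coeff (pCons a p) i))"
    by (rule coeff_norm1_eq_sum) (simp add: degree_pCons_le)
  also have "\<dots> = norm a + (\<Sum>i\<le>degree p. norm (coeff p i))"
    by (subst sum.atMost_Suc_shift) simp
  finally show ?thesis
    by (simp add: coeff_norm1_def)
qed

lemma coeff_norm1_smult: "coeff_norm1 (smult a p) = norm a * coeff_norm1 p"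
  by (simp add: coeff_norm1_eq_sum[of _ "degree p"] degree_smult_le coeff_norm1_def norm_mult
      sum_distrib_left)

lemma coeff_norm1_add: "coeff_norm1 (p + q) \<le> coeff_norm1 p + coeff_norm1 q"
proof -
  define N where "N = max (degree p) (degree q)"
  have "coeff_norm1 (p + q) = (\<Sum>i\<le>N. norm (coeff (p + q) i))"
    by (rule coeff_norm1_eq_sum) (simp add: N_def degree_add_le)
  also have "\<dots> = (\<Sum>i\<le>N. norm (coeff p i + coeff q i))"
    by simp
  also have "\<dots> \<le> (\<Sum>i\<le>N. norm (coeff p i) + norm (coeff q i))"
    by (intro sum_mono norm_triangle_ineq)
  also have "\<dots> = coeff_norm1 p + coeff_norm1 q"
    by (simp add: coeff_norm1_eq_sum[of p N] coeff_norm1_eq_sum[of q N] N_def sum.distrib)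
  finally show ?thesis .
qed

lemma coeff_norm1_mult: "coeff_norm1 (p * q) \<le> coeff_norm1 p * coeff_norm1 q"
proof (induction p rule: pCons_induct)
  case (pCons a p)
  have "coeff_norm1 (pCons a p * q) \<le> coeff_norm1 (smult a q) + coeff_norm1 (pCons 0 (p * q))"
    using coeff_norm1_add by simp
  also have "\<dots> \<le> norm a * coeff_norm1 q + coeff_norm1 p * coeff_norm1 q"
    using pCons.IH by (simp add: coeff_norm1_smult coeff_norm1_pCons)
  finally show ?case
    by (simp add: coeff_norm1_pCons algebra_simps)
qed simp

lemma coeff_norm1_monom_1 [simp]: "coeff_norm1 (monom 1 k) = 1"
proof -
  have "coeff_norm1 (monom 1 k :: 'a poly) = (\<Sum>i\<le>k. if i = k then 1 else 0)"
    unfolding coeff_norm1_def degree_monom_eq[OF one_neq_zero]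
    by (intro sum.cong) (auto simp: coeff_monom)
  then show ?thesis
    by simp
qed

text \<open>Induction step: \<open>(x\<^sup>e + a)(x\<^sup>E + b) - x\<^sup>e\<^sup>+\<^sup>E = x\<^sup>e b + a x\<^sup>E + a b\<close>, and \<open>coeff_norm1\<close>
  is submultiplicative.\<close>
lemma coeff_norm1_prod_mset_minus_monom:
  assumes "\<And>x. x \<in># X \<Longrightarrow> coeff_norm1 (f x - monom 1 (e x)) \<le> \<delta>" and "\<delta> \<ge> 0"
  shows "coeff_norm1 ((\<Prod>x\<in>#X. f x) - monom 1 (\<Sum>x\<in>#X. e x)) \<le> (1 + \<delta>) ^ size X - 1"
  using assms(1)
proof (induction X)
  case (add x X)
  define a where "a = f x - monom 1 (e x)"
  define b where "b = (\<Prod>x\<in>#X. f x) - monom 1 (\<Sum>x\<in>#X. e x)"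
  have a: "coeff_norm1 a \<le> \<delta>" and b: "coeff_norm1 b \<le> (1 + \<delta>) ^ size X - 1"
    using add by (auto simp: a_def b_def)
  then have ab: "coeff_norm1 a * coeff_norm1 b \<le> \<delta> * ((1 + \<delta>) ^ size X - 1)"
    using coeff_norm1_nonneg[of a] coeff_norm1_nonneg[of b] assms(2) by (intro mult_mono) auto
  have "(\<Prod>x\<in>#add_mset x X. f x) - monom 1 (\<Sum>x\<in>#add_mset x X. e x)
      = monom 1 (e x) * b + (a * monom 1 (\<Sum>x\<in>#X. e x) + a * b)"
    by (simp add: a_def b_def algebra_simps mult_monom)
  also have "coeff_norm1 \<dots> \<le> coeff_norm1 (monom 1 (e x) * b)
      + (coeff_norm1 (a * monom 1 (\<Sum>x\<in>#X. e x)) + coeff_norm1 (a * b))"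
    using coeff_norm1_add[of "monom 1 (e x) * b" "a * monom 1 (\<Sum>x\<in>#X. e x) + a * b"]
      coeff_norm1_add[of "a * monom 1 (\<Sum>x\<in>#X. e x)" "a * b"]
    by linarith
  also have "\<dots> \<le> coeff_norm1 b + (coeff_norm1 a + coeff_norm1 a * coeff_norm1 b)"
    using coeff_norm1_mult[of "monom 1 (e x)" b] coeff_norm1_mult[of a "monom 1 _"]
      coeff_norm1_mult[of a b]
    by (intro add_mono) simp_all
  also have "\<dots> \<le> ((1 + \<delta>) ^ size X - 1) + (\<delta> + \<delta> * ((1 + \<delta>) ^ size X - 1))"
    using a b ab by linarith
  finally show ?case
    by (simp add: algebra_simps)
qed simp

lemma T_test_smult_iff:
  assumes "c \<noteq> 0"
  shows "T_test (smult c G) n K k \<longleftrightarrow> T_test G n K k"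
proof -
  have "T_test (smult c G) n K k \<longleftrightarrow>
      cmod c * (K * (\<Sum>i\<in>{0..n} - {k}. cmod (coeff G i))) < cmod c * cmod (coeff G k)"
    by (simp add: T_test_def norm_mult sum_distrib_left mult_ac)
  then show ?thesis
    using assms by (simp add: T_test_def)
qed

lemma T_test_monom_plus:
  assumes "k \<le> n" and small: "coeff_norm1 T < 2/3"
  shows "T_test (monom 1 k + T) n (3/2) k"
proof -
  define S where "S = (\<Sum>i\<in>{0..n}. cmod (coeff T i))"
  have "S \<le> (\<Sum>i\<le>max n (degree T). cmod (coeff T i))"
    unfolding S_def by (intro sum_mono2) auto
  then have "S \<le> coeff_norm1 T"
    using coeff_norm1_eq_sum[of T "max n (degree T)"] by simp
  moreover have "cmod (coeff T k) \<le> S"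
    unfolding S_def using assms(1) by (intro member_le_sum) auto
  moreover have "1 - cmod (coeff T k) \<le> cmod (1 + coeff T k)"
    using norm_triangle_ineq2[of 1 "- coeff T k"] by simp
  moreover have "(\<Sum>i\<in>{0..n} - {k}. cmod (coeff T i)) = S - cmod (coeff T k)"
    unfolding S_def using assms(1) by (subst sum_diff1) auto
  moreover have "(\<Sum>i\<in>{0..n} - {k}. cmod (coeff (monom 1 k + T) i))
      = (\<Sum>i\<in>{0..n} - {k}. cmod (coeff T i))"
    by (intro sum.cong) (auto simp: coeff_monom)
  moreover have "cmod (coeff (monom 1 k + T) k) = cmod (1 + coeff T k)"
    by simp
  ultimately show ?thesis
    using small norm_ge_zero[of "coeff T k"] unfolding T_test_def by linarith
qed

lemma T_test_unique:
  assumes "T_test G n 1 j" and "T_test G n (3/2) k" and "j \<le> n" and "k \<le> n"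
  shows "j = k"
proof (rule ccontr)
  assume "j \<noteq> k"
  then have "cmod (coeff G k) \<le> (\<Sum>i\<in>{0..n} - {j}. cmod (coeff G i))"
    and "cmod (coeff G j) \<le> (\<Sum>i\<in>{0..n} - {k}. cmod (coeff G i))"
    using assms(3,4) by (auto intro!: member_le_sum)
  then show False
    using assms(1,2) norm_ge_zero[of "coeff G j"] by (simp add: T_test_def)
qed

lemma prod_linear_reverse_factors:
  fixes W :: "complex multiset"
  assumes "\<And>w. w \<in># W \<Longrightarrow> \<not> P w \<Longrightarrow> w \<noteq> 0"
  shows "(\<Prod>w\<in>#W. [:-w, 1:]) = smult (\<Prod>w\<in>#filter_mset (\<lambda>w. \<not> P w) W. -w)
           (\<Prod>w\<in>#W. if P w then [:-w, 1:] else [:1, -1/w:])"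
  using assms
proof (induction W)
  case (add x W)
  define D where "D = (\<Prod>w\<in>#filter_mset (\<lambda>w. \<not> P w) W. -w)"
  define Q where "Q = (\<Prod>w\<in>#W. if P w then [:-w, 1:] else [:1, -1/w:])"
  have IH: "(\<Prod>w\<in>#W. [:-w, 1:]) = smult D Q"
    using add by (simp add: D_def Q_def)
  show ?case
  proof (cases "P x")
    case False
    then have "[:-x, 1:] = smult (-x) [:1, -1/x:]"
      using add.prems by simp
    then have "(\<Prod>w\<in>#add_mset x W. [:-w, 1:]) = smult (-x * D) ([:1, -1/x:] * Q)"
      by (simp only: prod_mset.add_mset image_mset_add_mset IH mult_smult_left
          mult_smult_right smult_smult mult.commute)
    then show ?thesis
      using False by (simp add: D_def Q_def)
  qed (simp add: IH D_def Q_def mult_ac)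
qed simp

lemma complex_poly_decompose_reversed:
  fixes G :: "complex poly"
  assumes "G \<noteq> 0" and "\<And>w. poly G w = 0 \<Longrightarrow> \<not> P w \<Longrightarrow> w \<noteq> 0"
  obtains d where "d \<noteq> 0"
    and "G = smult d (\<Prod>w\<in>#proots G. if P w then [:-w, 1:] else [:1, -1/w:])"
proof
  show "G = smult (lead_coeff G * (\<Prod>w\<in>#filter_mset (\<lambda>w. \<not> P w) (proots G). -w))
      (\<Prod>w\<in>#proots G. if P w then [:-w, 1:] else [:1, -1/w:])"
    using prod_linear_reverse_factors[of "proots G" P] complex_poly_decompose_multiset[of G] assms
    by simp
  show "lead_coeff G * (\<Prod>w\<in>#filter_mset (\<lambda>w. \<not> P w) (proots G). -w) \<noteq> 0"
    using assms by (auto simp: prod_mset_zero_iff)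
qed

text \<open>The main estimate: reversing the factors of the huge roots makes \<open>G\<close>, up to a scalar,
  a product of factors each within \<open>\<delta>\<close> of \<open>x\<close> or of \<open>1\<close>.\<close>
theorem T_test_of_separated_roots:
  fixes G :: "complex poly"
  assumes "G \<noteq> 0" and "degree G \<le> n" and "\<delta> > 0" and "(1 + \<delta>) ^ degree G < 5/3"
    and sep: "\<And>w. poly G w = 0 \<Longrightarrow> cmod w < \<delta> \<or> 1 / \<delta> \<le> cmod w"
  shows "T_test G n (3/2) (root_count G (disk 0 \<delta>))"
proof -
  define W where "W = proots G"
  define tiny where "tiny = (\<lambda>w::complex. cmod w < \<delta>)"
  define f where "f = (\<lambda>w. if tiny w then [:-w, 1:] else [:1, -1/w:])"
  define e where "e = (\<lambda>w. if tiny w then 1 else 0 :: nat)"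
  define k where "k = root_count G (disk 0 \<delta>)"
  have huge: "poly G w = 0 \<Longrightarrow> \<not> tiny w \<Longrightarrow> 1 / \<delta> \<le> cmod w" for w
    using sep tiny_def by blast
  then have nonzero: "poly G w = 0 \<Longrightarrow> \<not> tiny w \<Longrightarrow> w \<noteq> 0" for w
    using assms(3) by fastforce
  obtain d where "d \<noteq> 0" and G: "G = smult d (\<Prod>w\<in>#W. f w)"
    using complex_poly_decompose_reversed[OF assms(1) nonzero] unfolding W_def f_def by blast
  have "(\<Sum>w\<in>#W. e w) = size (filter_mset tiny W)"
    by (induction W) (simp_all add: e_def)
  then have e_sum: "(\<Sum>w\<in>#W. e w) = k"
    using assms(1) by (simp add: k_def W_def root_count_eq_size_proots disk_def tiny_def)
  have "coeff_norm1 (f w - monom 1 (e w)) \<le> \<delta>" if "w \<in># W" for w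
  proof (cases "tiny w")
    case False
    have "poly G w = 0"
      using that assms(1) by (simp add: W_def)
    with False have "1 / cmod w \<le> \<delta>"
      using huge nonzero assms(3) by (simp add: divide_le_eq mult.commute)
    with False show ?thesis
      by (simp add: f_def e_def coeff_norm1_pCons norm_divide one_pCons)
  qed (simp add: f_def e_def tiny_def monom_Suc coeff_norm1_pCons one_pCons)
  then have "coeff_norm1 ((\<Prod>w\<in>#W. f w) - monom 1 (\<Sum>w\<in>#W. e w)) \<le> (1 + \<delta>) ^ size W - 1"
    using assms(3) by (intro coeff_norm1_prod_mset_minus_monom) auto
  then have "coeff_norm1 ((\<Prod>w\<in>#W. f w) - monom 1 k) < 2/3"
    using assms(4) unfolding e_sum by (simp add: W_def size_proots_complex)
  moreover have "k \<le> n"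
    using root_count_le_degree[OF assms(1)] assms(2) unfolding k_def by (rule order_trans)
  ultimately have "T_test (monom 1 k + ((\<Prod>w\<in>#W. f w) - monom 1 k)) n (3/2) k"
    by (intro T_test_monom_plus)
  then have "T_test (smult d (\<Prod>w\<in>#W. f w)) n (3/2) k"
    by (simp add: T_test_smult_iff \<open>d \<noteq> 0\<close>)
  then show ?thesis
    by (simp only: G[symmetric] k_def)
qed

lemma graeffe_N_bound:
  assumes "n \<ge> 2"
  shows "real n * (2 * sqrt 2 / 3) ^ 2 ^ graeffe_N n \<le> 1/4"
proof -
  define L where "L = log 2 (real n)"
  define K where "K = nat \<lceil>log 2 (1 + L)\<rceil>"
  define q :: real where "q = (8/9) ^ 16"
  have "L \<ge> 1"
    using assms by (simp add: L_def)
  have q: "0 < q" "q \<le> 1/4"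
    by (simp_all add: q_def power_divide)
  have "graeffe_N n = K + 5"
    by (simp add: graeffe_N_def K_def L_def)
  then have "(2 * sqrt 2 / 3) ^ 2 ^ graeffe_N n = ((2 * sqrt 2 / 3) ^ 2) ^ (16 * 2 ^ K)"
    by (simp add: power_mult[symmetric] power_add mult.commute)
  also have "\<dots> = q ^ 2 ^ K"
    by (simp add: q_def power_divide power_mult_distrib power_mult)
  finally have q_pow: "(2 * sqrt 2 / 3) ^ 2 ^ graeffe_N n = q ^ 2 ^ K" .
  have "log 2 (1 + L) \<le> real K"
    unfolding K_def using \<open>L \<ge> 1\<close> by linarith
  then have "1 + L \<le> 2 ^ K"
    using \<open>L \<ge> 1\<close> by (simp add: log_le_iff powr_realpow)
  then have "q ^ 2 ^ K \<le> q powr (1 + L)"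
    using q by (simp add: powr_mono' flip: powr_realpow)
  also have "\<dots> \<le> q * (1/2) powr L"
    using q \<open>L \<ge> 1\<close> by (simp add: powr_add powr_mono2)
  also have "(1/2) powr L = 1 / real n"
    using assms by (simp add: powr_divide L_def)
  finally have "real n * q ^ 2 ^ K \<le> q"
    using assms by (simp add: field_simps)
  then show ?thesis
    unfolding q_pow using q by linarith
qed

lemma one_plus_power_less:
  fixes \<delta> :: real
  assumes "\<delta> \<ge> 0" and "real n * \<delta> \<le> 1/4"
  shows "(1 + \<delta>) ^ n < 5/3"
proof -
  have "(1 + \<delta>) ^ n \<le> exp \<delta> ^ n"
    using assms(1) by (intro power_mono) auto
  also have "\<dots> \<le> exp (1/4)"
    using assms(2) by (simp flip: exp_of_nat_mult)
  also have "exp (1/4 :: real) < 5/3"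
  proof (rule power_less_imp_less_base)
    have "exp (1/4 :: real) ^ 4 = exp 1"
      by (simp flip: exp_of_nat_mult)
    then show "exp (1/4 :: real) ^ 4 < (5/3) ^ 4"
      using exp_le by (simp add: power_divide)
  qed simp
  finally show ?thesis .
qed

lemma T_star_eqI:
  assumes "\<And>j. j \<le> n \<Longrightarrow> Tt j = STrue \<Longrightarrow> T_test G n 1 j"
    and "k \<le> n" and "Tt k = STrue" and "T_test G n (3/2) k"
  shows "T_star n Tt = int k"
proof -
  have "(SOME j. j \<le> n \<and> Tt j = STrue) = k"
    using assms T_test_unique by (intro some_equality) blast+
  then show ?thesis
    using assms(2,3) by (auto simp: T_star_def)
qed

lemma T_star_eq_intD:
  assumes "T_star n Tt = int k"
  shows "k \<le> n \<and> Tt k = STrue"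
proof -
  have ex: "\<exists>j\<le>n. Tt j = STrue"
    using assms by (auto simp: T_star_def split: if_splits)
  then have "k = (SOME j. j \<le> n \<and> Tt j = STrue)"
    using assms by (simp add: T_star_def)
  then show ?thesis
    using someI_ex[of "\<lambda>j. j \<le> n \<and> Tt j = STrue"] ex by blast
qed

lemma T_test_graeffe_of_isolating:
  fixes F :: "complex poly"
  assumes iso: "isolating F m r (2 * sqrt 2 / 3) (4/3) k"
    and "degree F = n" and "n \<ge> 2" and "r > 0"
  shows "T_test (graeffe_iter (graeffe_N n) (F_disk F m r)) n (3/2) k"
proof -
  define \<rho>\<^sub>1 :: real where "\<rho>\<^sub>1 = 2 * sqrt 2 / 3"
  define \<delta> where "\<delta> = \<rho>\<^sub>1 ^ 2 ^ graeffe_N n"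
  define P where "P = F_disk F m r"
  define G where "G = graeffe_iter (graeffe_N n) P"
  have "F \<noteq> 0" and "P \<noteq> 0" and "G \<noteq> 0" and "degree G = n"
    using assms(2-4) by (auto simp: P_def G_def F_disk_eq_0_iff graeffe_iter_eq_0_iff
        degree_graeffe_iter degree_F_disk)
  have "9/8 \<le> sqrt 2"
    by (rule real_le_rsqrt) (simp add: power2_eq_square)
  then have "0 < \<rho>\<^sub>1" and "1 \<le> \<rho>\<^sub>1 * (4/3)"
    by (simp_all add: \<rho>\<^sub>1_def)
  moreover have "\<And>b. poly P b = 0 \<Longrightarrow> cmod b < \<rho>\<^sub>1 \<or> 4/3 \<le> cmod b"
    using isolating_roots_F_disk[OF iso[folded \<rho>\<^sub>1_def] assms(4)] by (simp add: P_def)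
  ultimately have "poly G w = 0 \<Longrightarrow> cmod w < \<delta> \<or> 1 / \<delta> \<le> cmod w" for w
    unfolding G_def \<delta>_def by (rule graeffe_iter_roots_separated[OF \<open>P \<noteq> 0\<close>])
  moreover have "(1 + \<delta>) ^ degree G < 5/3"
    using \<open>0 < \<rho>\<^sub>1\<close> graeffe_N_bound[OF assms(3)]
    by (intro one_plus_power_less) (simp_all add: \<delta>_def \<rho>\<^sub>1_def \<open>degree G = n\<close>)
  ultimately have "T_test G n (3/2) (root_count G (disk 0 \<delta>))"
    using \<open>0 < \<rho>\<^sub>1\<close> by (intro T_test_of_separated_roots) (simp_all add: \<open>G \<noteq> 0\<close> \<open>degree G = n\<close> \<delta>_def)
  also have "root_count G (disk 0 \<delta>) = k"
    using iso \<open>0 < \<rho>\<^sub>1\<close> \<open>F \<noteq> 0\<close> assms(4)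
    by (simp add: G_def P_def \<delta>_def root_count_graeffe_iter_disk \<open>P \<noteq> 0\<close>[unfolded P_def]
        root_count_F_disk isolating_def \<rho>\<^sub>1_def)
  finally show ?thesis
    by (simp add: G_def P_def)
qed

theorem lemma3p9:
  fixes F :: "complex poly" and m :: complex and r :: real and n :: nat
    and Tt :: "nat \<Rightarrow> soft_result"
  assumes "degree F = n" and "n \<ge> 2" and "r > 0"
    and "\<And>k. k \<le> n \<Longrightarrow>
           (Tt k = STrue \<longrightarrow> T_test (graeffe_iter (graeffe_N n) (F_disk F m r)) n 1 k) \<and>
           (T_test (graeffe_iter (graeffe_N n) (F_disk F m r)) n (3/2) k \<longrightarrow> Tt k = STrue)"
  shows "(\<forall>k. isolating F m r (2 * sqrt 2 / 3) (4/3) k \<longrightarrow> T_star n Tt = int k)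
       \<and> (\<forall>k. T_star n Tt = int k \<longrightarrow> root_count F (disk m r) = k)"
proof -
  define G where "G = graeffe_iter (graeffe_N n) (F_disk F m r)"
  have "F \<noteq> 0"
    using assms(1,2) by auto
  have "root_count G (disk 0 1) = root_count F (disk m r)"
    using root_count_graeffe_iter_disk[of "F_disk F m r" 1] root_count_F_disk[OF \<open>F \<noteq> 0\<close> assms(3), of m 1]
      \<open>F \<noteq> 0\<close> assms(3) by (simp add: G_def F_disk_eq_0_iff)
  moreover have "degree G = n"
    using assms(1,3) by (simp add: G_def degree_graeffe_iter degree_F_disk)
  ultimately have sound: "root_count F (disk m r) = k" if "T_star n Tt = int k" for k
    using that T_star_eq_intD assms(4) root_count_unit_disk_of_T_test[of G n k]
    unfolding G_def by auto
  have complete: "T_star n Tt = int k" if iso: "isolating F m r (2 * sqrt 2 / 3) (4/3) k" for k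
  proof -
    have "k \<le> n"
      using iso root_count_le_degree[OF \<open>F \<noteq> 0\<close>] assms(1) by (auto simp: isolating_def)
    moreover have "T_test G n (3/2) k"
      unfolding G_def using iso assms(1-3) by (rule T_test_graeffe_of_isolating)
    ultimately show ?thesis
      using assms(4) by (intro T_star_eqI[where G = G]) (auto simp: G_def)
  qed
  show ?thesis
    using sound complete by blast
qed

end
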